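(* Let $\tau\in[0,1]$ and let $e$ be a Gaussian random vector in $\mathbb{R}^n$ with mean $m_e$ and positive semidefinite covariance $K_e$. Then: (i) $\mathcal{H}_\tau(e,\lambda)\ge0$, with equality if and only if $e=0$ (i.e. $m_e=0$ and $K_e=0$); (ii) $\lambda\mapsto\mathcal{H}_\tau(e,\lambda)$ is a monotone decreasing function.
   Context: The $\tau$ entropy is defined, for $\lambda>0$ with $\lambda>(1-\tau)\|K_e\|$ ($\|\cdot\|$ the spectral norm), by $\mathcal{H}_0(e,\lambda)=m_e^T(I_n-\frac1\lambda K_e)^{-1}m_e-\lambda\log\det(I_n-\frac1\lambda K_e)$; for $0<\tau<1$, $\mathcal{H}_\tau(e,\lambda)=m_e^T(I_n-\frac{1-\tau}\lambda K_e)^{-1}m_e+\frac\lambda\tau\mathrm{tr}\big((I_n-\frac{1-\tau}\lambda K_e)^{\frac\tau{\tau-1}}-I_n\big)$; $\mathcal{H}_1(e,\lambda)=m_e^Tm_e+\lambda\,\mathrm{tr}(\exp(\frac1\lambda K_e)-I_n)$; and $\mathcal{H}_\tau(e,\lambda)=\infty$ for other $\lambda$. *)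

theory Defs
  imports "HOL-Analysis.Analysis"
begin

definition diag_mat :: "('n::finite \<Rightarrow> real) \<Rightarrow> real^'n^'n" where
  "diag_mat mu = (\<chi> i j. if i = j then mu i else 0)"

definition mat_fun :: "(real \<Rightarrow> real) \<Rightarrow> real^'n::finite^'n \<Rightarrow> real^'n^'n" where
  "mat_fun f A = (SOME B. \<exists>P mu. orthogonal_matrix P \<and>
      A = P ** diag_mat mu ** transpose P \<and> B = P ** diag_mat (f \<circ> mu) ** transpose P)"

definition spec_norm :: "real^'n::finite^'n \<Rightarrow> real" where
  "spec_norm K = onorm (\<lambda>x. K *v x)"

definition H_tau :: "real \<Rightarrow> real^'n::finite \<Rightarrow> real^'n^'n \<Rightarrow> real \<Rightarrow> ereal" where
  "H_tau tau m K lam =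
    (if lam > 0 \<and> lam > (1 - tau) * spec_norm K then
       (if tau = 0 then
          ereal (m \<bullet> (matrix_inv (mat 1 - (1/lam) *\<^sub>R K) *v m)
                 - lam * ln (det (mat 1 - (1/lam) *\<^sub>R K)))
        else if 0 < tau \<and> tau < 1 then
          ereal (m \<bullet> (matrix_inv (mat 1 - ((1 - tau)/lam) *\<^sub>R K) *v m)
                 + (lam / tau) * trace (mat_fun (\<lambda>x. x powr (tau / (tau - 1)))
                                        (mat 1 - ((1 - tau)/lam) *\<^sub>R K) - mat 1))
        else if tau = 1 then
          ereal (m \<bullet> m + lam * trace (mat_fun exp ((1/lam) *\<^sub>R K) - mat 1))
        else \<infinity>)
     else \<infinity>)"

end

theory Submission
  imports Defs
begin

text \<open>
  Diagonalise the covariance, K = P diag(\<kappa>) P^T with P orthogonal. In the coordinates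
  y = P^T m the entropy splits into a sum of one-dimensional entropies
  y_i^2 / (1 - (1 - \<tau>) \<kappa>_i / \<lambda>) + \<lambda> \<phi>(\<kappa>_i / \<lambda>), where \<phi> = phi_tau \<tau> satisfies \<phi>(0) = 0
  and has a positive nondecreasing derivative. By the mean value theorem \<phi>(s) > 0 for s > 0
  and \<phi>(s) \<le> s \<phi>'(s); the latter says exactly that the perspective \<lambda> \<mapsto> \<lambda> \<phi>(\<kappa> / \<lambda>) is
  nonincreasing. Each summand is thus nonnegative, vanishes only for y_i = \<kappa>_i = 0, and
  decreases in \<lambda>.
\<close>

section \<open>The generator phi_tau and its perspective\<close>

definition phi_tau :: "real \<Rightarrow> real \<Rightarrow> real" where
  "phi_tau tau s =
    (if tau = 0 then - ln (1 - s)
     else if tau < 1 then ((1 - (1 - tau) * s) powr (tau / (tau - 1)) - 1) / tau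
     else exp s - 1)"

definition dphi_tau :: "real \<Rightarrow> real \<Rightarrow> real" where
  "dphi_tau tau s = (if tau < 1 then (1 - (1 - tau) * s) powr (1 / (tau - 1)) else exp s)"

lemma phi_tau_0 [simp]: "phi_tau tau 0 = 0"
  by (simp add: phi_tau_def)

lemma has_real_derivative_phi_tau:
  assumes "0 \<le> tau" "tau \<le> 1" "(1 - tau) * s < 1"
  shows "(phi_tau tau has_real_derivative dphi_tau tau s) (at s)"
proof -
  consider "tau = 0" | "0 < tau" "tau < 1" | "tau = 1" using assms by linarith
  then show ?thesis
  proof cases
    case 1
    have "((\<lambda>s. - ln (1 - s)) has_real_derivative 1 / (1 - s)) (at s)"
      using assms 1 by (auto intro!: derivative_eq_intros)
    moreover have "phi_tau tau = (\<lambda>s. - ln (1 - s))" using 1 by (simp add: phi_tau_def fun_eq_iff)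
    ultimately show ?thesis using assms 1 by (simp add: dphi_tau_def powr_neg_one)
  next
    case 2
    define b where "b = 1 - (1 - tau) * s"
    have b: "0 < b" using assms by (simp add: b_def)
    have "((\<lambda>s. ((1 - (1 - tau) * s) powr (tau / (tau - 1)) - 1) / tau) has_real_derivative
        tau / (tau - 1) * b powr (tau / (tau - 1) - 1) * (- (1 - tau)) / tau) (at s)"
      using b by (auto intro!: derivative_eq_intros simp: b_def)
    moreover have "tau / (tau - 1) * b powr (tau / (tau - 1) - 1) * (- (1 - tau)) / tau
        = b powr (1 / (tau - 1))"
      using 2 by (simp add: field_simps diff_divide_distrib[symmetric])
    moreover have "phi_tau tau = (\<lambda>s. ((1 - (1 - tau) * s) powr (tau / (tau - 1)) - 1) / tau)"
      using 2 by (simp add: phi_tau_def fun_eq_iff)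
    ultimately show ?thesis using 2 by (simp add: dphi_tau_def b_def)
  next
    case 3
    then have "phi_tau tau = (\<lambda>s. exp s - 1)" by (simp add: phi_tau_def fun_eq_iff)
    then show ?thesis using 3 by (auto simp: dphi_tau_def intro!: derivative_eq_intros)
  qed
qed

lemma dphi_tau_pos:
  assumes "(1 - tau) * s < 1"
  shows "0 < dphi_tau tau s"
  using assms by (simp add: dphi_tau_def)

lemma dphi_tau_mono:
  assumes "0 \<le> tau" "tau \<le> 1" "x \<le> y" "(1 - tau) * y < 1"
  shows "dphi_tau tau x \<le> dphi_tau tau y"
proof (cases "tau < 1")
  case True
  have "(1 - tau) * x \<le> (1 - tau) * y" using assms True by (intro mult_left_mono) auto
  then show ?thesis using assms True by (auto simp: dphi_tau_def intro!: powr_mono2')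
qed (use assms in \<open>simp add: dphi_tau_def\<close>)

lemma mvt_pos_and_le_mult_deriv:
  fixes f f' :: "real \<Rightarrow> real"
  assumes "f 0 = 0" "0 < s"
    and deriv: "\<And>x. 0 \<le> x \<Longrightarrow> x \<le> s \<Longrightarrow> (f has_real_derivative f' x) (at x)"
    and pos: "\<And>x. 0 \<le> x \<Longrightarrow> x \<le> s \<Longrightarrow> 0 < f' x"
    and mono: "\<And>x. 0 \<le> x \<Longrightarrow> x \<le> s \<Longrightarrow> f' x \<le> f' s"
  shows "0 < f s" "f s \<le> s * f' s"
proof -
  obtain z where z: "0 < z" "z < s" "f s - f 0 = (s - 0) * f' z"
    using MVT2[OF \<open>0 < s\<close>] deriv by blast
  then show "0 < f s" using pos[of z] \<open>0 < s\<close> \<open>f 0 = 0\<close> by simp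
  show "f s \<le> s * f' s" using z mono[of z] \<open>0 < s\<close> \<open>f 0 = 0\<close> by simp
qed

lemma perspective_antimono:
  fixes f f' :: "real \<Rightarrow> real"
  assumes "0 \<le> k" "0 < l1" "l1 \<le> l2"
    and deriv: "\<And>x. 0 \<le> x \<Longrightarrow> x \<le> k / l1 \<Longrightarrow> (f has_real_derivative f' x) (at x)"
    and tangent: "\<And>x. 0 \<le> x \<Longrightarrow> x \<le> k / l1 \<Longrightarrow> f x \<le> x * f' x"
  shows "l2 * f (k / l2) \<le> l1 * f (k / l1)"
proof (rule DERIV_nonpos_imp_nonincreasing[OF \<open>l1 \<le> l2\<close>])
  fix l assume l: "l1 \<le> l" "l \<le> l2"
  have l0: "0 < l" using l assms by linarith
  have s: "0 \<le> k / l" "k / l \<le> k / l1" using assms l0 l by (auto intro: divide_left_mono)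
  have "((\<lambda>l. k / l) has_real_derivative - k / l^2) (at l)"
    using l0 by (auto intro!: derivative_eq_intros simp: power2_eq_square)
  then have "((\<lambda>l. f (k / l)) has_real_derivative f' (k / l) * (- k / l^2)) (at l)"
    by (rule DERIV_chain2[where f = f and g = "\<lambda>l. k / l" and x = l, OF deriv[OF s]])
  then have "((\<lambda>l. l * f (k / l)) has_real_derivative
      l * (f' (k / l) * (- k / l^2)) + 1 * f (k / l)) (at l)"
    by (rule DERIV_mult'[OF DERIV_ident])
  moreover have "l * (f' (k / l) * (- k / l^2)) + 1 * f (k / l) = f (k / l) - k / l * f' (k / l)"
    using l0 by (simp add: power2_eq_square field_simps)
  ultimately show "\<exists>y. ((\<lambda>l. l * f (k / l)) has_real_derivative y) (at l) \<and> y \<le> 0"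
    using tangent[OF s] by auto
qed

lemma phi_tau_pos:
  assumes "0 \<le> tau" "tau \<le> 1" "0 < s" "(1 - tau) * s < 1"
  shows "0 < phi_tau tau s"
proof -
  have "(1 - tau) * x < 1" if "x \<le> s" for x
    using mult_left_mono[OF that, of "1 - tau"] assms by linarith
  then show ?thesis
    using mvt_pos_and_le_mult_deriv(1)[of "phi_tau tau" s "dphi_tau tau"] assms
    by (simp add: has_real_derivative_phi_tau dphi_tau_pos dphi_tau_mono)
qed

lemma phi_tau_le_mult_dphi_tau:
  assumes "0 \<le> tau" "tau \<le> 1" "0 \<le> s" "(1 - tau) * s < 1"
  shows "phi_tau tau s \<le> s * dphi_tau tau s"
proof (cases "s = 0")
  case False
  have "(1 - tau) * x < 1" if "x \<le> s" for x
    using mult_left_mono[OF that, of "1 - tau"] assms by linarith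
  then show ?thesis
    using mvt_pos_and_le_mult_deriv(2)[of "phi_tau tau" s "dphi_tau tau"] assms False
    by (simp add: has_real_derivative_phi_tau dphi_tau_pos dphi_tau_mono)
qed simp

lemma phi_tau_perspective_antimono:
  assumes "0 \<le> tau" "tau \<le> 1" "0 \<le> k" "0 < l1" "(1 - tau) * k < l1" "l1 \<le> l2"
  shows "l2 * phi_tau tau (k / l2) \<le> l1 * phi_tau tau (k / l1)"
proof (rule perspective_antimono[OF assms(3,4,6)])
  fix x assume x: "0 \<le> x" "x \<le> k / l1"
  have "(1 - tau) * x \<le> (1 - tau) * (k / l1)" using x assms by (intro mult_left_mono) auto
  also have "\<dots> < 1" using assms by (simp add: field_simps)
  finally have "(1 - tau) * x < 1" .
  then show "(phi_tau tau has_real_derivative dphi_tau tau x) (at x)"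
    and "phi_tau tau x \<le> x * dphi_tau tau x"
    using assms x by (simp_all add: has_real_derivative_phi_tau phi_tau_le_mult_dphi_tau)
qed

section \<open>Spectral theorem for real symmetric matrices\<close>

lemma inner_symmetric_matrix_commute:
  fixes A :: "real^'n^'n"
  assumes "transpose A = A"
  shows "x \<bullet> (A *v y) = (A *v x) \<bullet> y"
  by (metis assms dot_lmul_matrix transpose_matrix_vector)

lemma quadratic_nonpos_imp_linear_coeff_zero:
  fixes a b :: real
  assumes "\<And>t. 2 * t * a + t^2 * b \<le> 0" and "0 \<le> a"
  shows "a = 0"
proof (rule ccontr)
  assume "a \<noteq> 0"
  with \<open>0 \<le> a\<close> have a: "0 < a" by simp
  show False
  proof (cases "0 \<le> b")
    case True
    then show ?thesis using assms(1)[of 1] a by simp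
  next
    case False
    define t where "t = a / - b"
    have "0 < t" unfolding t_def using a False by (intro divide_pos_pos) auto
    have "t * b = - a" using False by (simp add: t_def)
    have "2 * t * a + t^2 * b = 2 * t * a + t * (t * b)" by (simp add: power2_eq_square)
    also have "\<dots> = t * a" using \<open>t * b = - a\<close> by simp
    finally have "2 * t * a + t^2 * b = t * a" .
    moreover have "0 < t * a" using \<open>0 < t\<close> a by simp
    ultimately show False using assms(1)[of t] by linarith
  qed
qed

lemma rayleigh_maximizer_is_eigenvector:
  fixes A :: "real^'n^'n"
  assumes sym: "transpose A = A"
    and S: "subspace S" "\<forall>x\<in>S. A *v x \<in> S"
    and v: "v \<in> S" "norm v = 1"
    and max: "\<And>y. y \<in> S \<Longrightarrow> y \<bullet> (A *v y) \<le> (v \<bullet> (A *v v)) * (norm y)^2"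
  shows "A *v v = (v \<bullet> (A *v v)) *\<^sub>R v"
proof -
  define c where "c = v \<bullet> (A *v v)"
  define w where "w = A *v v - c *\<^sub>R v"
  have "w \<in> S" unfolding w_def using S v by (simp add: subspace_diff subspace_scale)
  have vv: "v \<bullet> v = 1" using v by (simp add: norm_eq_1)
  have ww: "w \<bullet> w = w \<bullet> (A *v v) - c * (v \<bullet> w)"
    by (simp add: w_def algebra_simps inner_commute)
  \<comment> \<open>The Rayleigh quotient along v + t w, maximal at t = 0, has zero derivative there.\<close>
  have "2 * t * (w \<bullet> w) + t^2 * (w \<bullet> (A *v w) - c * (norm w)^2) \<le> 0" for t
  proof -
    have "v + t *\<^sub>R w \<in> S" using S v \<open>w \<in> S\<close> by (simp add: subspace_add subspace_scale)
    then have bound: "(v + t *\<^sub>R w) \<bullet> (A *v (v + t *\<^sub>R w)) \<le> c * (norm (v + t *\<^sub>R w))^2"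
      unfolding c_def by (rule max)
    have e1: "(v + t *\<^sub>R w) \<bullet> (A *v (v + t *\<^sub>R w))
        = c + 2 * t * (w \<bullet> (A *v v)) + t^2 * (w \<bullet> (A *v w))"
      using inner_symmetric_matrix_commute[OF sym, of v w]
      by (simp add: c_def algebra_simps matrix_vector_right_distrib inner_commute power2_eq_square)
    have e2: "(norm (v + t *\<^sub>R w))^2 = 1 + 2 * t * (v \<bullet> w) + t^2 * (norm w)^2"
    proof -
      have "(norm (v + t *\<^sub>R w))^2 = (v + t *\<^sub>R w) \<bullet> (v + t *\<^sub>R w)"
        by (simp add: power2_norm_eq_inner)
      also have "\<dots> = v \<bullet> v + 2 * t * (v \<bullet> w) + t^2 * (w \<bullet> w)"
        by (simp add: inner_add inner_commute algebra_simps power2_eq_square)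
      finally show ?thesis using vv by (simp add: power2_norm_eq_inner)
    qed
    have "2 * t * (w \<bullet> w) + t^2 * (w \<bullet> (A *v w) - c * (norm w)^2)
        = (v + t *\<^sub>R w) \<bullet> (A *v (v + t *\<^sub>R w)) - c * (norm (v + t *\<^sub>R w))^2"
      unfolding e1 e2 ww by (simp add: algebra_simps)
    then show ?thesis using bound by linarith
  qed
  then have "w \<bullet> w = 0" by (rule quadratic_nonpos_imp_linear_coeff_zero) simp
  then show ?thesis by (simp add: w_def c_def)
qed

lemma symmetric_matrix_eigenvector_in_invariant_subspace:
  fixes A :: "real^'n^'n"
  assumes sym: "transpose A = A"
    and S: "subspace S" "\<forall>x\<in>S. A *v x \<in> S" "S \<noteq> {0}"
  obtains v c where "v \<in> S" "norm v = 1" "A *v v = c *\<^sub>R v"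
proof -
  let ?q = "\<lambda>x. x \<bullet> (A *v x)"
  obtain x where "x \<in> S" "x \<noteq> 0" using S subspace_0 by blast
  then have "x /\<^sub>R norm x \<in> S \<inter> sphere 0 1" using S by (simp add: subspace_scale)
  moreover have "compact (S \<inter> sphere 0 1)"
    using closed_subspace[OF \<open>subspace S\<close>] by (simp add: closed_Int_compact)
  moreover have "continuous_on (S \<inter> sphere 0 1) ?q" by (intro continuous_intros)
  ultimately obtain v where v: "v \<in> S" "norm v = 1" and vmax: "\<forall>y\<in>S \<inter> sphere 0 1. ?q y \<le> ?q v"
    using continuous_attains_sup[of "S \<inter> sphere 0 1" ?q] by fastforce
  have "?q y \<le> ?q v * (norm y)^2" if "y \<in> S" for y
  proof (cases "y = 0")
    case False
    have "y /\<^sub>R norm y \<in> S \<inter> sphere 0 1" using that S False by (simp add: subspace_scale)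
    then have "?q (y /\<^sub>R norm y) \<le> ?q v" using vmax by blast
    moreover have "?q (y /\<^sub>R norm y) = ?q y / (norm y)^2"
      by (simp add: linear_scale power2_eq_square divide_inverse)
    ultimately show ?thesis using False by (simp add: divide_le_eq)
  qed simp
  then have "A *v v = ?q v *\<^sub>R v" by (intro rayleigh_maximizer_is_eigenvector[OF sym S(1,2) v])
  with v that show ?thesis by blast
qed

lemma span_insert_unit_eq_if_span_orthogonal_complement:
  assumes S: "subspace S" and v: "v \<in> S" "norm v = 1" and B: "span B = {x\<in>S. v \<bullet> x = 0}"
  shows "span (insert v B) = S"
proof
  have "B \<subseteq> S" using B span_superset by blast
  then show "span (insert v B) \<subseteq> S" using S v by (intro span_minimal) auto
  show "S \<subseteq> span (insert v B)"
  proof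
    fix y assume "y \<in> S"
    then have "y - (v \<bullet> y) *\<^sub>R v \<in> span B"
      using v S B by (auto simp: subspace_diff subspace_scale inner_diff_right norm_eq_1)
    then have "y - (v \<bullet> y) *\<^sub>R v \<in> span (insert v B)"
      using span_mono[of B "insert v B"] by auto
    moreover have "(v \<bullet> y) *\<^sub>R v \<in> span (insert v B)"
      by (simp add: span_base span_scale)
    ultimately have "(y - (v \<bullet> y) *\<^sub>R v) + (v \<bullet> y) *\<^sub>R v \<in> span (insert v B)"
      by (rule span_add)
    then show "y \<in> span (insert v B)" by simp
  qed
qed

lemma symmetric_matrix_invariant_subspace_orthonormal_eigenbasis:
  fixes A :: "real^'n^'n"
  assumes sym: "transpose A = A"
  shows "subspace S \<Longrightarrow> \<forall>x\<in>S. A *v x \<in> S \<Longrightarrow>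
    \<exists>B. B \<subseteq> S \<and> span B = S \<and> pairwise orthogonal B \<and> (\<forall>v\<in>B. norm v = 1 \<and> (\<exists>c. A *v v = c *\<^sub>R v))"
proof (induct "dim S" arbitrary: S rule: less_induct)
  case less
  show ?case
  proof (cases "S = {0}")
    case True
    then show ?thesis by (intro exI[of _ "{}"]) auto
  next
    case False
    then obtain v c where v: "v \<in> S" "norm v = 1" "A *v v = c *\<^sub>R v"
      using symmetric_matrix_eigenvector_in_invariant_subspace[OF sym less.prems] by blast
    define S' where "S' = {x\<in>S. v \<bullet> x = 0}"
    have sub': "subspace S'" using less.prems(1) unfolding S'_def subspace_def
      by (auto simp: inner_add_right)
    have inv': "\<forall>x\<in>S'. A *v x \<in> S'"
      using less.prems(2) inner_symmetric_matrix_commute[OF sym, of v] v(3) unfolding S'_def by auto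
    have "v \<notin> S'" using v unfolding S'_def by (auto simp: norm_eq_1)
    then have "S' \<subset> S" using v unfolding S'_def by blast
    then have "dim S' < dim S"
      using sub' less.prems(1) by (metis dim_psubset span_eq_iff)
    then obtain B' where B': "B' \<subseteq> S'" "span B' = S'" "pairwise orthogonal B'"
      "\<forall>v\<in>B'. norm v = 1 \<and> (\<exists>c. A *v v = c *\<^sub>R v)"
      using less.hyps[OF _ sub' inv'] by blast
    have "span (insert v B') = S"
      using B'(2) unfolding S'_def
      by (rule span_insert_unit_eq_if_span_orthogonal_complement[OF less.prems(1) v(1,2)])
    moreover have "pairwise orthogonal (insert v B')"
      using B'(1,3) unfolding pairwise_insert S'_def by (auto simp: orthogonal_def inner_commute)
    moreover have "insert v B' \<subseteq> S" using B'(1) v(1) unfolding S'_def by auto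
    ultimately show ?thesis using B'(4) v by (intro exI[of _ "insert v B'"]) auto
  qed
qed

lemma symmetric_matrix_orthogonal_diagonalization:
  fixes A :: "real^'n^'n"
  assumes sym: "transpose A = A"
  obtains P mu where "orthogonal_matrix P" "A = P ** diag_mat mu ** transpose P"
proof -
  obtain B where B: "span B = UNIV" "pairwise orthogonal B"
    "\<forall>v\<in>B. norm v = 1 \<and> (\<exists>c. A *v v = c *\<^sub>R v)"
    using symmetric_matrix_invariant_subspace_orthonormal_eigenbasis[OF sym, of UNIV] by auto
  have "0 \<notin> B" using B(3) by force
  then have ind: "independent B" using B(2) pairwise_orthogonal_independent by blast
  then have "card B = dim (UNIV :: (real^'n) set)"
    using dim_span_eq_card_independent[OF ind] B(1) by simp
  then obtain f where f: "bij_betw f (UNIV::'n set) B"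
    using finite_same_card_bij[OF finite finiteI_independent[OF ind]] by auto
  define mu where "mu j = (SOME c. A *v f j = c *\<^sub>R f j)" for j
  have fB: "f j \<in> B" for j using f bij_betwE by blast
  have eig: "A *v f j = mu j *\<^sub>R f j" for j
    unfolding mu_def using B(3) fB[of j] by (metis (mono_tags) someI_ex)
  define P :: "real^'n^'n" where "P = (\<chi> i j. f j $ i)"
  have col: "column j P = f j" for j by (simp add: P_def column_def vec_eq_iff)
  have oP: "orthogonal_matrix P"
    unfolding orthogonal_matrix_orthonormal_columns col
  proof (intro conjI allI impI)
    show "norm (f i) = 1" for i using B(3) fB by blast
    show "orthogonal (f i) (f j)" if "i \<noteq> j" for i j
      using B(2) fB[of i] fB[of j] f that unfolding pairwise_def bij_betw_def inj_on_def by blast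
  qed
  have "(A ** P) $ i $ j = (P ** diag_mat mu) $ i $ j" for i j
  proof -
    have "(A ** P) $ i $ j = (A *v f j) $ i"
      by (simp add: matrix_matrix_mult_def matrix_vector_mult_def P_def)
    also have "\<dots> = (P ** diag_mat mu) $ i $ j"
      by (simp add: eig matrix_matrix_mult_def diag_mat_def P_def if_distrib if_distribR sum.delta'
          cong: if_cong)
    finally show ?thesis .
  qed
  then have AP: "A ** P = P ** diag_mat mu" by (simp add: vec_eq_iff)
  have "A = A ** (P ** transpose P)" using oP by (simp add: orthogonal_matrix_def)
  also have "\<dots> = P ** diag_mat mu ** transpose P" by (simp add: matrix_mul_assoc AP)
  finally show ?thesis using oP that by blast
qed

section \<open>Orthogonally diagonalised matrices\<close>

lemma sum_comp_eq_if_card_fibres_eq: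
  fixes a b :: "'n::finite \<Rightarrow> 'a" and g :: "'a \<Rightarrow> real"
  assumes "\<And>t. card {i. a i = t} = card {i. b i = t}"
  shows "(\<Sum>i\<in>UNIV. g (a i)) = (\<Sum>i\<in>UNIV. g (b i))"
proof -
  have fibres: "(\<Sum>i\<in>UNIV. g (c i)) = (\<Sum>t\<in>range c. real (card {i. c i = t}) * g t)"
    for c :: "'n \<Rightarrow> 'a"
    by (subst sum.image_gen[of UNIV _ c]) auto
  have "range a = {t. card {i. a i = t} \<noteq> 0}" "range b = {t. card {i. b i = t} \<noteq> 0}"
    by auto
  then show ?thesis using assms unfolding fibres by simp
qed

lemma diag_mat_mult_vec: "diag_mat a *v y = (\<chi> i. a i * y $ i)"
  by (simp add: diag_mat_def matrix_vector_mult_def vec_eq_iff if_distrib if_distribR cong: if_cong)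

lemma diag_mat_mult: "diag_mat a ** diag_mat b = diag_mat (\<lambda>i. a i * b i)"
proof -
  have "(\<Sum>k\<in>UNIV. (if i = k then a i else 0) * (if k = j then b k else 0))
      = (\<Sum>k\<in>UNIV. if k = i then a i * (if k = j then b k else 0) else 0)" for i j :: 'a
    by (intro sum.cong) auto
  then show ?thesis by (simp add: vec_eq_iff matrix_matrix_mult_def diag_mat_def)
qed

lemma dim_eigenspace_diag_conj:
  fixes P :: "real^'n^'n"
  assumes oP: "orthogonal_matrix P"
  shows "dim {x. (P ** diag_mat a ** transpose P) *v x = t *\<^sub>R x} = card {i. a i = t}"
proof -
  let ?E = "{y::real^'n. \<forall>i. i \<notin> {i. a i = t} \<longrightarrow> y $ i = 0}"
  have PtP: "transpose P ** P = mat 1" and PPt: "P ** transpose P = mat 1"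
    using oP by (auto simp: orthogonal_matrix_def)
  have E: "diag_mat a *v y = t *\<^sub>R y \<longleftrightarrow> y \<in> ?E" for y
    by (auto simp: diag_mat_mult_vec vec_eq_iff)
  have "{x. (P ** diag_mat a ** transpose P) *v x = t *\<^sub>R x} = (\<lambda>y. P *v y) ` ?E"
  proof (intro set_eqI iffI)
    fix x assume "x \<in> {x. (P ** diag_mat a ** transpose P) *v x = t *\<^sub>R x}"
    then have "transpose P *v ((P ** diag_mat a ** transpose P) *v x) = transpose P *v (t *\<^sub>R x)"
      by simp
    then have "diag_mat a *v (transpose P *v x) = t *\<^sub>R (transpose P *v x)"
      by (simp add: matrix_vector_mul_assoc matrix_mul_assoc PtP linear_scale
          del: transpose_matrix_vector)
    moreover have "x = P *v (transpose P *v x)"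
      by (simp add: matrix_vector_mul_assoc PPt del: transpose_matrix_vector)
    ultimately show "x \<in> (\<lambda>y. P *v y) ` ?E" using E by blast
  next
    fix x assume "x \<in> (\<lambda>y. P *v y) ` ?E"
    then obtain y where y: "y \<in> ?E" "x = P *v y" by blast
    have "(P ** diag_mat a ** transpose P) *v x = P *v (diag_mat a *v y)"
      by (simp add: y(2) matrix_vector_mul_assoc matrix_mul_assoc[symmetric] PtP
          del: transpose_matrix_vector)
    also have "\<dots> = t *\<^sub>R x" using E[of y] y by (simp add: linear_scale)
    finally show "x \<in> {x. (P ** diag_mat a ** transpose P) *v x = t *\<^sub>R x}" by simp
  qed
  moreover have "inj ((*v) P)"
    by (metis PtP inj_on_inverseI matrix_vector_mul_assoc matrix_vector_mul_lid)
  then have "dim ((\<lambda>y. P *v y) ` ?E) = dim ?E"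
    by (intro dim_image_eq) (auto intro: inj_on_subset)
  moreover have "dim ?E = card {i. a i = t}"
    using dim_substandard_cart[of "{i. a i = t}", where 'a=real] unfolding dim_vec_eq by simp
  ultimately show ?thesis by simp
qed

lemma diag_conj_affine:
  fixes P :: "real^'n^'n"
  assumes oP: "orthogonal_matrix P"
  shows "x *\<^sub>R mat 1 + c *\<^sub>R (P ** diag_mat d ** transpose P)
    = P ** diag_mat (\<lambda>i. x + c * d i) ** transpose P"
proof -
  have entry: "(P ** diag_mat d ** transpose P) $ i $ j = (\<Sum>k\<in>UNIV. P$i$k * d k * P$j$k)" for d i j
    by (simp add: matrix_matrix_mult_def diag_mat_def transpose_def if_distrib if_distribR sum.delta'
        cong: if_cong)
  have one: "(\<Sum>k\<in>UNIV. P$i$k * P$j$k) = mat 1 $ i $ j" for i j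
    using arg_cong[OF oP[unfolded orthogonal_matrix_def, THEN conjunct2], of "\<lambda>M. M$i$j"]
    by (simp add: matrix_matrix_mult_def transpose_def)
  show ?thesis
    by (simp add: vec_eq_iff entry algebra_simps sum.distrib sum_distrib_left flip: one)
qed

lemma diag_conj_one_minus:
  fixes P :: "real^'n^'n"
  assumes "orthogonal_matrix P"
  shows "mat 1 - c *\<^sub>R (P ** diag_mat d ** transpose P) = P ** diag_mat (\<lambda>i. 1 - c * d i) ** transpose P"
  using diag_conj_affine[OF assms, of 1 "-c" d] by (simp add: algebra_simps)

lemma diag_conj_scale:
  fixes P :: "real^'n^'n"
  assumes "orthogonal_matrix P"
  shows "c *\<^sub>R (P ** diag_mat d ** transpose P) = P ** diag_mat (\<lambda>i. c * d i) ** transpose P"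
  using diag_conj_affine[OF assms, of 0 c d] by simp

lemma diag_conj_one:
  fixes P :: "real^'n^'n"
  assumes "orthogonal_matrix P"
  shows "P ** diag_mat (\<lambda>i. 1) ** transpose P = mat 1"
  using diag_conj_affine[OF assms, of 1 0] by simp

lemma diag_conj_mult:
  fixes P :: "real^'n^'n"
  assumes oP: "orthogonal_matrix P"
  shows "(P ** diag_mat a ** transpose P) ** (P ** diag_mat b ** transpose P)
    = P ** diag_mat (\<lambda>i. a i * b i) ** transpose P"
proof -
  have PtP: "transpose P ** P = mat 1" using oP by (simp add: orthogonal_matrix_def)
  have "(P ** diag_mat a ** transpose P) ** (P ** diag_mat b ** transpose P)
     = P ** diag_mat a ** (transpose P ** P) ** diag_mat b ** transpose P"
    by (simp add: matrix_mul_assoc)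
  also have "\<dots> = P ** (diag_mat a ** diag_mat b) ** transpose P"
    by (simp add: PtP matrix_mul_assoc)
  finally show ?thesis by (simp add: diag_mat_mult)
qed

lemma matrix_inv_diag_conj:
  fixes P :: "real^'n^'n"
  assumes oP: "orthogonal_matrix P" and nz: "\<And>i. d i \<noteq> 0"
  shows "matrix_inv (P ** diag_mat d ** transpose P) = P ** diag_mat (\<lambda>i. 1 / d i) ** transpose P"
proof -
  let ?A = "P ** diag_mat d ** transpose P" and ?B = "P ** diag_mat (\<lambda>i. 1 / d i) ** transpose P"
  have AB: "?A ** ?B = mat 1" "?B ** ?A = mat 1"
    using diag_conj_mult[OF oP, of d "\<lambda>i. 1 / d i"] diag_conj_mult[OF oP, of "\<lambda>i. 1 / d i" d]
      nz diag_conj_one[OF oP] by simp_all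
  show ?thesis unfolding matrix_inv_def
  proof (rule some_equality)
    show "?A ** ?B = mat 1 \<and> ?B ** ?A = mat 1" using AB by simp
    fix C assume C: "?A ** C = mat 1 \<and> C ** ?A = mat 1"
    have "C = C ** (?A ** ?B)" by (simp only: AB matrix_mul_rid)
    also have "\<dots> = (C ** ?A) ** ?B" by (simp only: matrix_mul_assoc)
    finally show "C = ?B" using C by simp
  qed
qed

lemma inner_diag_conj:
  fixes P :: "real^'n^'n"
  shows "m \<bullet> ((P ** diag_mat d ** transpose P) *v m) = (\<Sum>i\<in>UNIV. d i * ((transpose P *v m) $ i)^2)"
proof -
  let ?y = "transpose P *v m"
  have "m \<bullet> ((P ** diag_mat d ** transpose P) *v m) = m \<bullet> (P *v (diag_mat d *v ?y))"
    by (simp add: matrix_vector_mul_assoc matrix_mul_assoc del: transpose_matrix_vector)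
  also have "\<dots> = (m v* P) \<bullet> (diag_mat d *v ?y)"
    by (simp add: dot_lmul_matrix del: transpose_matrix_vector)
  also have "\<dots> = ?y \<bullet> (diag_mat d *v ?y)" by simp
  also have "\<dots> = (\<Sum>i\<in>UNIV. d i * (?y $ i)^2)"
    by (simp add: inner_vec_def diag_mat_mult_vec power2_eq_square algebra_simps
        del: transpose_matrix_vector)
  finally show ?thesis .
qed

lemma det_diag_conj:
  fixes P :: "real^'n^'n"
  assumes "orthogonal_matrix P"
  shows "det (P ** diag_mat d ** transpose P) = (\<Prod>i\<in>UNIV. d i)"
proof -
  have "det P * det P = 1" using det_orthogonal_matrix[OF assms] by auto
  moreover have "det (diag_mat d) = (\<Prod>i\<in>UNIV. d i)"
    by (subst det_diagonal) (auto simp: diag_mat_def)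
  ultimately show ?thesis by (simp add: det_mul det_transpose)
qed

lemma trace_diag_conj:
  fixes P :: "real^'n^'n"
  assumes "orthogonal_matrix P"
  shows "trace (P ** diag_mat d ** transpose P) = (\<Sum>i\<in>UNIV. d i)"
proof -
  have "trace (P ** diag_mat d ** transpose P) = trace (transpose P ** (P ** diag_mat d))"
    by (rule trace_mul_sym)
  also have "\<dots> = trace (diag_mat d)"
    using assms by (simp add: matrix_mul_assoc orthogonal_matrix_def)
  also have "\<dots> = (\<Sum>i\<in>UNIV. d i)" by (simp add: trace_def diag_mat_def)
  finally show ?thesis .
qed

text \<open>
  mat_fun picks an arbitrary spectral decomposition; its trace is nevertheless
  determined, because eigenvalue multiplicities are dimensions of eigenspaces.
\<close>
lemma trace_mat_fun:
  fixes P :: "real^'n^'n"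
  assumes oP: "orthogonal_matrix P" and A: "A = P ** diag_mat d ** transpose P"
  shows "trace (mat_fun f A) = (\<Sum>i\<in>UNIV. f (d i))"
proof -
  let ?Q = "\<lambda>B. \<exists>P mu. orthogonal_matrix P \<and> A = P ** diag_mat mu ** transpose P
    \<and> B = P ** diag_mat (f \<circ> mu) ** transpose P"
  have "?Q (P ** diag_mat (f \<circ> d) ** transpose P)" using oP A by blast
  then have "?Q (mat_fun f A)" unfolding mat_fun_def by (rule someI)
  then obtain Q mu where Q: "orthogonal_matrix Q" "A = Q ** diag_mat mu ** transpose Q"
    "mat_fun f A = Q ** diag_mat (f \<circ> mu) ** transpose Q" by blast
  have "card {i. mu i = t} = card {i. d i = t}" for t
    using dim_eigenspace_diag_conj[OF Q(1), of mu t] dim_eigenspace_diag_conj[OF oP, of d t] Q(2) A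
    by simp
  then have "(\<Sum>i\<in>UNIV. f (mu i)) = (\<Sum>i\<in>UNIV. f (d i))" by (rule sum_comp_eq_if_card_fibres_eq)
  then show ?thesis using Q by (simp add: trace_diag_conj)
qed

lemma trace_mat_fun_minus_one:
  fixes P :: "real^'n^'n"
  assumes "orthogonal_matrix P"
  shows "trace (mat_fun f (P ** diag_mat d ** transpose P) - mat 1) = (\<Sum>i\<in>UNIV. f (d i) - 1)"
  by (simp add: trace_sub trace_I trace_mat_fun[OF assms refl] sum_subtractf)

lemma diag_conj_eigenvalue_bounds:
  fixes P K :: "real^'n^'n"
  assumes oP: "orthogonal_matrix P" and K: "K = P ** diag_mat kappa ** transpose P"
    and psd: "\<forall>x. 0 \<le> x \<bullet> (K *v x)"
  shows "0 \<le> kappa i" "kappa i \<le> spec_norm K"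
proof -
  let ?c = "column i P"
  have PtP: "transpose P ** P = mat 1" using oP by (simp add: orthogonal_matrix_def)
  have "K *v (P *v axis i 1) = P *v (diag_mat kappa *v axis i 1)"
    by (simp add: K matrix_vector_mul_assoc matrix_mul_assoc[symmetric] PtP
        del: transpose_matrix_vector)
  also have "diag_mat kappa *v axis i 1 = kappa i *\<^sub>R axis i (1::real)"
    by (simp add: diag_mat_mult_vec vec_eq_iff axis_def)
  finally have e: "K *v ?c = kappa i *\<^sub>R ?c"
    by (simp add: matrix_vector_mult_basis linear_scale)
  have n: "norm ?c = 1" using oP orthogonal_matrix_orthonormal_columns by blast
  have "?c \<bullet> (K *v ?c) = kappa i" using e n by (simp add: norm_eq_1)
  then show "0 \<le> kappa i" using psd by metis
  moreover have "norm (K *v ?c) \<le> onorm (\<lambda>x. K *v x) * norm ?c" by (rule onorm) simp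
  ultimately show "kappa i \<le> spec_norm K" using e n by (simp add: spec_norm_def)
qed

section \<open>The tau entropy in eigencoordinates\<close>

definition H_tau_scalar :: "real \<Rightarrow> real \<Rightarrow> real \<Rightarrow> real \<Rightarrow> real" where
  "H_tau_scalar tau y k lam = y^2 / (1 - (1 - tau) * k / lam) + lam * phi_tau tau (k / lam)"

lemma H_tau_scalar_nonneg:
  assumes "0 \<le> tau" "tau \<le> 1" "0 \<le> k" "0 < lam" "(1 - tau) * k < lam"
  shows "0 \<le> H_tau_scalar tau y k lam"
proof -
  have "0 < 1 - (1 - tau) * k / lam" using assms by (simp add: field_simps)
  moreover have "0 \<le> phi_tau tau (k / lam)"
    using phi_tau_pos[of tau "k / lam"] assms by (cases "k = 0") (simp_all add: field_simps)
  ultimately show ?thesis using assms by (simp add: H_tau_scalar_def)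
qed

lemma H_tau_scalar_eq_0_iff:
  assumes "0 \<le> tau" "tau \<le> 1" "0 \<le> k" "0 < lam" "(1 - tau) * k < lam"
  shows "H_tau_scalar tau y k lam = 0 \<longleftrightarrow> y = 0 \<and> k = 0"
proof -
  have "0 < 1 - (1 - tau) * k / lam" using assms by (simp add: field_simps)
  then have q: "0 \<le> y^2 / (1 - (1 - tau) * k / lam)" "y^2 / (1 - (1 - tau) * k / lam) = 0 \<longleftrightarrow> y = 0"
    by auto
  have "0 < phi_tau tau (k / lam)" if "k \<noteq> 0"
    using phi_tau_pos[of tau "k / lam"] assms that by (simp add: field_simps)
  then have p: "0 \<le> lam * phi_tau tau (k / lam)" "lam * phi_tau tau (k / lam) = 0 \<longleftrightarrow> k = 0"
    using assms by (cases "k = 0"; simp)+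
  show ?thesis unfolding H_tau_scalar_def using add_nonneg_eq_0_iff[OF q(1) p(1)] q(2) p(2) by simp
qed

lemma H_tau_scalar_antimono:
  assumes "0 \<le> tau" "tau \<le> 1" "0 \<le> k" "0 < l1" "(1 - tau) * k < l1" "l1 \<le> l2"
  shows "H_tau_scalar tau y k l2 \<le> H_tau_scalar tau y k l1"
proof -
  have "0 < 1 - (1 - tau) * k / l1" using assms by (simp add: field_simps)
  moreover have "(1 - tau) * k / l2 \<le> (1 - tau) * k / l1"
    using assms by (intro divide_left_mono) auto
  ultimately have "y^2 / (1 - (1 - tau) * k / l2) \<le> y^2 / (1 - (1 - tau) * k / l1)"
    by (intro divide_left_mono) auto
  then show ?thesis
    using phi_tau_perspective_antimono[OF assms] by (simp add: H_tau_scalar_def)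
qed

lemma H_tau_infeasible:
  assumes "\<not> (0 < lam \<and> (1 - tau) * spec_norm K < lam)"
  shows "H_tau tau m K lam = \<infinity>"
  using assms by (auto simp: H_tau_def)

context
  fixes tau :: real and P K :: "real^'n^'n" and kappa :: "'n \<Rightarrow> real"
  assumes tau: "0 \<le> tau" "tau \<le> 1"
    and oP: "orthogonal_matrix P" and KP: "K = P ** diag_mat kappa ** transpose P"
    and kappa_nonneg: "\<And>i. 0 \<le> kappa i" and kappa_le: "\<And>i. kappa i \<le> spec_norm K"
begin

lemma eigenvalue_feasible:
  assumes "(1 - tau) * spec_norm K < lam"
  shows "(1 - tau) * kappa i < lam"
  using mult_left_mono[OF kappa_le[of i], of "1 - tau"] tau assms by linarith

lemma inner_matrix_inv_one_minus_scaleR: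
  assumes "\<And>i. 1 - c * kappa i \<noteq> 0"
  shows "m \<bullet> (matrix_inv (mat 1 - c *\<^sub>R K) *v m)
    = (\<Sum>i\<in>UNIV. (transpose P *v m) $ i ^ 2 / (1 - c * kappa i))"
proof -
  have "matrix_inv (mat 1 - c *\<^sub>R K) = P ** diag_mat (\<lambda>i. 1 / (1 - c * kappa i)) ** transpose P"
    unfolding KP diag_conj_one_minus[OF oP] using assms by (rule matrix_inv_diag_conj[OF oP])
  then show ?thesis by (simp add: inner_diag_conj)
qed

lemma H_tau_eq_sum_H_tau_scalar:
  assumes lam: "0 < lam" "(1 - tau) * spec_norm K < lam"
  shows "H_tau tau m K lam = ereal (\<Sum>i\<in>UNIV. H_tau_scalar tau ((transpose P *v m) $ i) (kappa i) lam)"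
proof -
  let ?y = "transpose P *v m"
  have pos: "0 < 1 - (1 - tau) / lam * kappa i" for i
    using eigenvalue_feasible[OF lam(2), of i] lam by (simp add: field_simps)
  then have "1 - (1 - tau) / lam * kappa i \<noteq> 0" for i by (metis less_irrefl)
  from inner_matrix_inv_one_minus_scaleR[OF this, of m]
  have quad: "m \<bullet> (matrix_inv (mat 1 - ((1 - tau) / lam) *\<^sub>R K) *v m)
      = (\<Sum>i\<in>UNIV. ?y $ i ^ 2 / (1 - (1 - tau) * kappa i / lam))"
    by simp
  note trace = trace_mat_fun_minus_one[OF oP]
  consider "tau = 0" | "0 < tau" "tau < 1" | "tau = 1" using tau by linarith
  then show ?thesis
  proof cases
    case 1
    have "0 < 1 - kappa i / lam" for i using pos[of i] 1 by simp
    then have nz: "1 - kappa i / lam \<noteq> 0" for i by (metis less_irrefl)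
    have "det (mat 1 - (1 / lam) *\<^sub>R K) = (\<Prod>i\<in>UNIV. 1 - kappa i / lam)"
      unfolding KP diag_conj_one_minus[OF oP] det_diag_conj[OF oP] by simp
    moreover have "ln (\<Prod>i\<in>UNIV. 1 - kappa i / lam) = (\<Sum>i\<in>UNIV. ln (1 - kappa i / lam))"
      using nz by (simp add: ln_prod)
    ultimately show ?thesis using quad 1 lam
      by (simp add: H_tau_def H_tau_scalar_def phi_tau_def sum.distrib sum_distrib_left sum_subtractf)
  next
    case 2
    have "trace (mat_fun (\<lambda>x. x powr (tau / (tau - 1))) (mat 1 - ((1 - tau) / lam) *\<^sub>R K) - mat 1)
        = (\<Sum>i\<in>UNIV. (1 - (1 - tau) * kappa i / lam) powr (tau / (tau - 1)) - 1)"
      unfolding KP diag_conj_one_minus[OF oP] trace by simp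
    then show ?thesis using quad 2 lam
      by (simp add: H_tau_def H_tau_scalar_def phi_tau_def sum.distrib sum_distrib_left)
  next
    case 3
    have "trace (mat_fun exp ((1 / lam) *\<^sub>R K) - mat 1) = (\<Sum>i\<in>UNIV. exp (kappa i / lam) - 1)"
      unfolding KP diag_conj_scale[OF oP] trace by simp
    moreover have "m \<bullet> m = (\<Sum>i\<in>UNIV. ?y $ i ^ 2)"
      using inner_diag_conj[of m P "\<lambda>i. 1"] by (simp add: diag_conj_one[OF oP])
    ultimately show ?thesis using 3 lam
      by (simp add: H_tau_def H_tau_scalar_def phi_tau_def sum.distrib sum_distrib_left)
  qed
qed

lemma H_tau_nonneg: "0 \<le> H_tau tau m K lam"
proof (cases "0 < lam \<and> (1 - tau) * spec_norm K < lam")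
  case True
  then show ?thesis
    using H_tau_scalar_nonneg[OF tau kappa_nonneg] eigenvalue_feasible
    by (simp add: H_tau_eq_sum_H_tau_scalar sum_nonneg)
qed (simp add: H_tau_infeasible)

lemma H_tau_eq_0_iff:
  assumes lam: "0 < lam"
  shows "H_tau tau m K lam = 0 \<longleftrightarrow> m = 0 \<and> K = 0"
proof
  assume H0: "H_tau tau m K lam = 0"
  have feasible: "(1 - tau) * spec_norm K < lam"
  proof (rule ccontr)
    assume "\<not> (1 - tau) * spec_norm K < lam"
    then have "H_tau tau m K lam = \<infinity>" by (simp add: H_tau_infeasible)
    with H0 show False by simp
  qed
  let ?h = "\<lambda>i. H_tau_scalar tau ((transpose P *v m) $ i) (kappa i) lam"
  have nonneg: "0 \<le> ?h i" for i
    by (rule H_tau_scalar_nonneg[OF tau kappa_nonneg lam eigenvalue_feasible[OF feasible]])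
  have "sum ?h UNIV = 0"
    using H0 H_tau_eq_sum_H_tau_scalar[OF lam feasible] by simp
  then have "\<forall>i\<in>UNIV. ?h i = 0"
    by (intro sum_nonneg_eq_0_iff[of UNIV ?h, THEN iffD1])
      (simp_all add: nonneg del: transpose_matrix_vector)
  then have "(transpose P *v m) $ i = 0 \<and> kappa i = 0" for i
    using H_tau_scalar_eq_0_iff[OF tau kappa_nonneg lam eigenvalue_feasible[OF feasible]]
    by (simp del: transpose_matrix_vector)
  then have y0: "transpose P *v m = 0" and k0: "kappa = (\<lambda>_. 0)"
    by (simp_all add: vec_eq_iff fun_eq_iff)
  have "m = P *v (transpose P *v m)"
    using oP by (simp add: matrix_vector_mul_assoc orthogonal_matrix_def del: transpose_matrix_vector)
  then have "m = 0" by (simp add: y0 del: transpose_matrix_vector)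
  moreover have "K = 0"
    using diag_conj_scale[OF oP, of 0 kappa] by (simp add: KP k0)
  ultimately show "m = 0 \<and> K = 0" ..
next
  assume mK: "m = 0 \<and> K = 0"
  then have "spec_norm K = 0" by (simp add: spec_norm_def onorm_zero)
  then have feasible: "(1 - tau) * spec_norm K < lam" and "kappa i = 0" for i
    using lam kappa_nonneg[of i] kappa_le[of i] by simp_all
  then show "H_tau tau m K lam = 0"
    using H_tau_eq_sum_H_tau_scalar[OF lam feasible] mK by (simp add: H_tau_scalar_def)
qed

lemma H_tau_antimono:
  assumes "lam1 \<le> lam2"
  shows "H_tau tau m K lam2 \<le> H_tau tau m K lam1"
proof (cases "0 < lam1 \<and> (1 - tau) * spec_norm K < lam1")
  case True
  then have "0 < lam2 \<and> (1 - tau) * spec_norm K < lam2" using assms by auto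
  moreover have "(\<Sum>i\<in>UNIV. H_tau_scalar tau ((transpose P *v m) $ i) (kappa i) lam2)
      \<le> (\<Sum>i\<in>UNIV. H_tau_scalar tau ((transpose P *v m) $ i) (kappa i) lam1)"
    using True
    by (intro sum_mono H_tau_scalar_antimono[OF tau kappa_nonneg _ eigenvalue_feasible assms]) auto
  ultimately show ?thesis
    using True by (simp add: H_tau_eq_sum_H_tau_scalar del: transpose_matrix_vector)
qed (simp add: H_tau_infeasible)

end

theorem proposition3:
  fixes tau :: real and m :: "real^'n" and K :: "real^'n^'n"
  assumes "0 \<le> tau" and "tau \<le> 1"
    and "transpose K = K"
    and "\<forall>x. 0 \<le> x \<bullet> (K *v x)"
  shows "(\<forall>lam. 0 \<le> H_tau tau m K lam)
       \<and> (\<forall>lam > 0. H_tau tau m K lam = 0 \<longleftrightarrow> (m = 0 \<and> K = 0))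
       \<and> (\<forall>lam1 lam2. lam1 \<le> lam2 \<longrightarrow> H_tau tau m K lam2 \<le> H_tau tau m K lam1)"
proof -
  obtain P kappa where oP: "orthogonal_matrix P" and KP: "K = P ** diag_mat kappa ** transpose P"
    using symmetric_matrix_orthogonal_diagonalization[OF assms(3)] .
  note spectral = assms(1,2) oP KP diag_conj_eigenvalue_bounds[OF oP KP assms(4)]
  show ?thesis
  proof (intro conjI allI impI)
    show "0 \<le> H_tau tau m K lam" for lam
      by (rule H_tau_nonneg[OF spectral])
    show "H_tau tau m K lam = 0 \<longleftrightarrow> m = 0 \<and> K = 0" if "0 < lam" for lam
      by (rule H_tau_eq_0_iff[OF spectral that])
    show "H_tau tau m K lam2 \<le> H_tau tau m K lam1" if "lam1 \<le> lam2" for lam1 lam2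
      by (rule H_tau_antimono[OF spectral that])
  qed
qed

end
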